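(* Let $(Z_n)_{n\ge0}$ be a linear fractional Galton–Watson process in i.i.d. random environment (as in the context) which is subcritical, i.e. $R^{(-1)}_\infty<\infty=R_\infty$ a.s. Then $$\Pi_n\,\mathbf{P}^{(n:1)}(Z_n>0)=\frac{1}{\mathbf{E}^{(n:1)}(Z_n\mid Z_n>0)}\ \xrightarrow{n\to\infty}\ \frac{1}{1+R^{(-1)}_\infty}\quad\text{a.s.},$$ and $$\Big\|\mathbf{P}^{(n:1)}(Z_n\in\cdot\mid Z_n>0)-\mathrm{Geom}_+\Big(\frac{1}{1+R^{(-1)}_\infty}\Big)\Big\|\ \xrightarrow{n\to\infty}\ 0\quad\text{a.s.},$$ where $\|\cdot\|$ is the total variation norm.
   Context: Let $(A_n,B_n)_{n\ge1}$ be i.i.d. copies of $(A,B)$ with $\mathbb{P}(A>0,B>0,A+B\ge1)=1$; $e_n=(A_n,B_n)$, $\mathbf{e}=(e_n)_{n\ge1}$. For $a,b>0$, $a+b\ge1$, $LF(a,b)$ is the distribution on $\mathbb{N}_0$ whose generating function $f$ satisfies $1/(1-f(s))=a/(1-s)+b$ for $s\in[0,1)$; equivalently $LF(a,b)=\frac{a+b-1}{a+b}\delta_0+\frac{1}{a+b}\mathrm{Geom}_+(\frac{a}{a+b})$, where $\mathrm{Geom}_+(p)$ is the geometric law on $\{1,2,\dots\}$ with weights $p(1-p)^{k-1}$. $(Z_n)_{n\ge0}$, $Z_0=1$, is a Galton–Watson process in random environment: given $\mathbf{e}$, each individual of generation $n-1$ independently has offspring distribution $LF(A_n,B_n)$.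 $\Pi_0=1$, $\Pi_n=\prod_{k=1}^nA_k$, $R_n=\sum_{k=1}^n\Pi_{k-1}B_k$, $R_\infty=\lim R_n$, $R^{(-1)}_n=\sum_{k=1}^n\Pi_k^{-1}B_k$, $R^{(-1)}_\infty=\lim R^{(-1)}_n$. $\mathbf{P}^{(n:1)},\mathbf{E}^{(n:1)}$ denote the quenched probability/expectation for the process run in the reversed environment $(e_n,e_{n-1},\dots,e_1)$ up to time $n$, i.e. given $(e_1,\dots,e_n)$, individuals of generation $k-1$ ($1\le k\le n$) have offspring law $LF(A_{n-k+1},B_{n-k+1})$. *)

theory Defs
  imports "HOL-Probability.Probability"
begin

definition geom_plus :: "real \<Rightarrow> nat pmf" where
  "geom_plus p = map_pmf Suc (geometric_pmf p)"

definition LF :: "real \<Rightarrow> real \<Rightarrow> nat pmf" where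
  "LF a b = bind_pmf (bernoulli_pmf (1 / (a + b)))
              (\<lambda>c. if c then geom_plus (a / (a + b)) else return_pmf 0)"

fun sum_iid_pmf :: "nat pmf \<Rightarrow> nat \<Rightarrow> nat pmf" where
  "sum_iid_pmf p 0 = return_pmf 0"
| "sum_iid_pmf p (Suc m) = bind_pmf p (\<lambda>x. map_pmf (\<lambda>y. x + y) (sum_iid_pmf p m))"

fun gw_law :: "(nat \<Rightarrow> nat pmf) \<Rightarrow> nat \<Rightarrow> nat pmf" where
  "gw_law L 0 = return_pmf 1"
| "gw_law L (Suc k) = bind_pmf (gw_law L k) (\<lambda>z. sum_iid_pmf (L (Suc k)) z)"

text \<open>Quenched law of Z_n in the reversed environment (e_n,...,e_1):
  generation k-1 (1 <= k <= n) has offspring law LF(A_{n-k+1}, B_{n-k+1}).\<close>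
definition Zrev :: "(nat \<Rightarrow> 'w \<Rightarrow> real) \<Rightarrow> (nat \<Rightarrow> 'w \<Rightarrow> real) \<Rightarrow> nat \<Rightarrow> 'w \<Rightarrow> nat pmf" where
  "Zrev A B n \<omega> = gw_law (\<lambda>k. LF (A (n - k + 1) \<omega>) (B (n - k + 1) \<omega>)) n"

definition Pi_env :: "(nat \<Rightarrow> 'w \<Rightarrow> real) \<Rightarrow> nat \<Rightarrow> 'w \<Rightarrow> real" where
  "Pi_env A n \<omega> = (\<Prod>k\<in>{1..n}. A k \<omega>)"

definition R_env :: "(nat \<Rightarrow> 'w \<Rightarrow> real) \<Rightarrow> (nat \<Rightarrow> 'w \<Rightarrow> real) \<Rightarrow> nat \<Rightarrow> 'w \<Rightarrow> real" where
  "R_env A B n \<omega> = (\<Sum>k\<in>{1..n}. Pi_env A (k - 1) \<omega> * B k \<omega>)"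

definition Rinv_env :: "(nat \<Rightarrow> 'w \<Rightarrow> real) \<Rightarrow> (nat \<Rightarrow> 'w \<Rightarrow> real) \<Rightarrow> nat \<Rightarrow> 'w \<Rightarrow> real" where
  "Rinv_env A B n \<omega> = (\<Sum>k\<in>{1..n}. B k \<omega> / Pi_env A k \<omega>)"

definition Rinv_inf :: "(nat \<Rightarrow> 'w \<Rightarrow> real) \<Rightarrow> (nat \<Rightarrow> 'w \<Rightarrow> real) \<Rightarrow> 'w \<Rightarrow> real" where
  "Rinv_inf A B \<omega> = lim (\<lambda>n. Rinv_env A B n \<omega>)"

text \<open>Total variation norm of the difference of two laws on nat
  (convention: sum of absolute differences of point masses).\<close>
definition tv_dist :: "nat pmf \<Rightarrow> nat pmf \<Rightarrow> real" where
  "tv_dist p q = (\<Sum>k. \<bar>pmf p k - pmf q k\<bar>)"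

end

theory Submission
  imports Defs
begin

text \<open>
  The generating function of LF(a,b) is the Moebius map f with 1/(1 - f(s)) = a/(1 - s) + b,
  so composing two of them composes affine maps of 1/(1 - s) and stays linear fractional.
  Hence in the reversed environment Z_n has law LF(Pi_n, Pi_n R^(-1)_n), which gives exactly
  Pi_n P(Z_n > 0) = 1/(1 + R^(-1)_n) and the conditional law Geom_+(1/(1 + R^(-1)_n)),
  whose mean is 1 + R^(-1)_n.  Both claims are then continuity statements in
  R^(-1)_n \<longrightarrow> R^(-1)_\<infinity>.
\<close>

text \<open>Valued in \<^typ>\<open>ennreal\<close>, so that bind and products need no integrability side conditions.\<close>
definition pgf :: "nat pmf \<Rightarrow> real \<Rightarrow> ennreal" where
  "pgf p s = (\<integral>\<^sup>+x. ennreal (s ^ x) \<partial>measure_pmf p)"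

lemma pgf_return_pmf: "pgf (return_pmf k) s = ennreal (s ^ k)"
  by (simp add: pgf_def)

lemma pgf_bind_pmf: "pgf (bind_pmf p f) s = (\<integral>\<^sup>+x. pgf (f x) s \<partial>measure_pmf p)"
  by (simp add: pgf_def)

lemma pgf_sum_iid_pmf:
  assumes "0 \<le> s"
  shows "pgf (sum_iid_pmf p m) s = pgf p s ^ m"
proof (induction m)
  case 0
  then show ?case by (simp add: pgf_return_pmf)
next
  case (Suc m)
  have "pgf (sum_iid_pmf p (Suc m)) s =
      (\<integral>\<^sup>+x. (\<integral>\<^sup>+y. ennreal (s ^ x) * ennreal (s ^ y) \<partial>measure_pmf (sum_iid_pmf p m)) \<partial>measure_pmf p)"
    using assms by (simp add: pgf_def power_add ennreal_mult)
  also have "\<dots> = (\<integral>\<^sup>+x. ennreal (s ^ x) * pgf (sum_iid_pmf p m) s \<partial>measure_pmf p)"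
    by (simp add: pgf_def nn_integral_cmult)
  also have "\<dots> = pgf p s * pgf (sum_iid_pmf p m) s"
    by (simp add: pgf_def nn_integral_multc)
  finally show ?case using Suc by (simp add: mult.commute)
qed

lemma pgf_geom_plus:
  assumes "0 < p" "p \<le> 1" "0 \<le> s" "s \<le> 1"
  shows "pgf (geom_plus p) s = ennreal (p * s / (1 - (1 - p) * s))"
proof -
  have lt: "\<bar>(1 - p) * s\<bar> < 1"
    using assms mult_left_le[of s "1 - p"] by (simp add: abs_mult)
  have "pgf (geom_plus p) s = (\<integral>\<^sup>+x. ennreal (s ^ Suc x) \<partial>measure_pmf (geometric_pmf p))"
    by (simp add: pgf_def geom_plus_def)
  also have "\<dots> = (\<Sum>x. ennreal (p * s * ((1 - p) * s) ^ x))"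
    using assms by (simp add: nn_integral_measure_pmf nn_integral_count_space_nat
        ennreal_mult[symmetric] power_mult_distrib mult_ac)
  also have "\<dots> = ennreal (p * s * (1 / (1 - (1 - p) * s)))"
    using assms lt by (intro suminf_ennreal_eq sums_mult geometric_sums) auto
  finally show ?thesis by simp
qed

text \<open>\<open>b = 0\<close> is allowed: \<open>LF 1 0\<close> is the point mass at 1, the law of \<open>Z\<^sub>0\<close>.\<close>
definition LF_admissible :: "real \<Rightarrow> real \<Rightarrow> bool" where
  "LF_admissible a b \<longleftrightarrow> 0 < a \<and> 0 \<le> b \<and> 1 \<le> a + b"

lemma LF_admissible_compose:
  assumes "LF_admissible a b" "LF_admissible c d"
  shows "LF_admissible (a * c) (a * d + b)"
proof -
  have "a + b \<le> a * (c + d) + b"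
    using assms mult_left_mono[of 1 "c + d" a] by (simp add: LF_admissible_def)
  then show ?thesis using assms by (simp add: LF_admissible_def algebra_simps)
qed

definition lf_gf :: "real \<Rightarrow> real \<Rightarrow> real \<Rightarrow> real" where
  "lf_gf a b s = 1 - (1 - s) / (a + b * (1 - s))"

lemma lf_gf_compose:
  assumes "0 < c" "0 \<le> d" "s \<le> 1"
  shows "lf_gf a b (lf_gf c d s) = lf_gf (a * c) (a * d + b) s"
proof -
  define u where "u = 1 - s"
  define D where "D = c + d * u"
  have "0 < D" using assms by (simp add: u_def D_def add_pos_nonneg)
  then have "a + b * (u / D) = (a * D + b * u) / D" by (simp add: field_simps)
  also have "a * D + b * u = a * c + (a * d + b) * u" by (simp add: D_def algebra_simps)
  finally have "(u / D) / (a + b * (u / D)) = u / (a * c + (a * d + b) * u)"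
    using \<open>0 < D\<close> by simp
  then show ?thesis by (simp add: lf_gf_def u_def[symmetric] D_def[symmetric])
qed

lemma lf_gf_bounds:
  assumes "LF_admissible a b" "0 \<le> s" "s \<le> 1"
  shows "0 \<le> lf_gf a b s" "lf_gf a b s \<le> 1"
proof -
  have "1 - s \<le> (a + b) * (1 - s)"
    using assms mult_right_mono[of 1 "a + b" "1 - s"] by (simp add: LF_admissible_def)
  also have "\<dots> \<le> a + b * (1 - s)"
    using assms mult_left_le[of "1 - s" a] by (simp add: LF_admissible_def algebra_simps)
  finally show "0 \<le> lf_gf a b s"
    using assms by (simp add: lf_gf_def LF_admissible_def divide_le_eq)
  show "lf_gf a b s \<le> 1"
    using assms by (simp add: lf_gf_def LF_admissible_def add_pos_nonneg)
qed

lemma pgf_LF: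
  assumes "LF_admissible a b" "0 \<le> s" "s \<le> 1"
  shows "pgf (LF a b) s = ennreal (lf_gf a b s)"
proof -
  define p where "p = a / (a + b)"
  define q where "q = 1 / (a + b)"
  have pq: "0 < p" "p \<le> 1" "0 \<le> q" "q \<le> 1"
    using assms by (auto simp: LF_admissible_def p_def q_def)
  define g where "g = p * s / (1 - (1 - p) * s)"
  have "0 < 1 - (1 - p) * s"
    using pq assms mult_left_le[of s "1 - p"] by simp
  then have "0 \<le> g" using pq assms by (simp add: g_def)
  have "pgf (LF a b) s = pgf (geom_plus p) s * ennreal q + pgf (return_pmf 0) s * ennreal (1 - q)"
    unfolding LF_def pgf_bind_pmf p_def[symmetric] q_def[symmetric]
    using pq by (subst nn_integral_bernoulli_pmf) auto
  also have "\<dots> = ennreal (g * q + (1 - q))"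
    using pq assms \<open>0 \<le> g\<close>
    by (simp add: pgf_geom_plus pgf_return_pmf g_def[symmetric] ennreal_mult ennreal_plus)
  also have "g * q + (1 - q) = lf_gf a b s"
  proof -
    define D where "D = a + b * (1 - s)"
    have pos: "0 < a + b" "0 < D"
      using assms by (auto simp: LF_admissible_def D_def add_pos_nonneg)
    have "1 - (1 - p) * s = D / (a + b)"
      using pos by (simp add: p_def D_def field_simps)
    then have g_eq: "g = a * s / D"
      using pos by (simp add: g_def p_def)
    have "g * q + (1 - q) = 1 - q * (1 - g)"
      by (simp add: algebra_simps)
    also have "1 - g = (a + b) * (1 - s) / D"
      unfolding g_eq using pos by (simp add: D_def field_simps)
    also have "q * ((a + b) * (1 - s) / D) = (1 - s) / D"
      using pos by (simp add: q_def)
    finally show ?thesis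
      by (simp add: lf_gf_def D_def)
  qed
  finally show ?thesis .
qed

lemma powser_coeffs_eq_0:
  fixes c :: "nat \<Rightarrow> real"
  assumes bounded: "\<And>k. \<bar>c k\<bar> \<le> 1"
    and sums_0: "\<And>s. 0 < s \<Longrightarrow> s < 1 \<Longrightarrow> (\<lambda>k. c k * s ^ k) sums 0"
  shows "c k = 0"
proof (induction k rule: less_induct)
  case (less k)
  define f where "f x = (\<Sum>n. c (n + k) * x ^ n)" for x :: real
  have f_sums: "(\<lambda>n. c (n + k) * x ^ n) sums f x" if "norm x < 1" for x :: real
  proof -
    have "summable (\<lambda>n. c (n + k) * x ^ n)"
    proof (rule summable_comparison_test)
      show "\<exists>N. \<forall>n\<ge>N. norm (c (n + k) * x ^ n) \<le> \<bar>x\<bar> ^ n"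
        using bounded by (auto simp: abs_mult power_abs intro!: mult_left_le_one_le)
      show "summable (\<lambda>n. \<bar>x\<bar> ^ n)" using that by (intro summable_geometric) simp
    qed
    then show ?thesis unfolding f_def by (rule summable_sums)
  qed
  have "(f \<longlongrightarrow> c k) (at 0)"
    using powser_limit_0[of 1 "\<lambda>n. c (n + k)" f] f_sums by simp
  then have lim_c: "(f \<longlongrightarrow> c k) (at_right 0)"
    by (rule filterlim_mono) (auto simp: at_within_le_at)
  \<comment> \<open>the coefficients below \<open>k\<close> vanish, so \<open>x\<^sup>k f(x)\<close> is the whole series, i.e. \<open>0\<close>\<close>
  have "f x = 0" if "0 < x" "x < 1" for x
  proof -
    have "(\<lambda>i. c (i + k) * x ^ (i + k)) sums (0 - (\<Sum>i<k. c i * x ^ i))"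
      using sums_0[OF that] by (subst sums_iff_shift) simp
    then have "(\<lambda>i. x ^ k * (c (i + k) * x ^ i)) sums 0"
      using less.IH by (simp add: power_add mult_ac)
    moreover have "(\<lambda>i. x ^ k * (c (i + k) * x ^ i)) sums (x ^ k * f x)"
      using f_sums[of x] that by (intro sums_mult) simp
    ultimately have "x ^ k * f x = 0" using sums_unique2 by blast
    then show ?thesis using that by simp
  qed
  then have "eventually (\<lambda>x. f x = 0) (at_right (0::real))"
    unfolding eventually_at_right_field by (intro exI[of _ 1]) auto
  then have "(f \<longlongrightarrow> 0) (at_right 0)"
    by (rule tendsto_eventually)
  with lim_c show ?case using tendsto_unique[of "at_right (0::real)"] by simp
qed

lemma pgf_sums_pmf:
  assumes "0 \<le> s" "s < 1"
  shows "(\<lambda>k. pmf p k * s ^ k) sums (\<Sum>k. pmf p k * s ^ k)"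
    and "pgf p s = ennreal (\<Sum>k. pmf p k * s ^ k)"
proof -
  have "summable (\<lambda>k. pmf p k * s ^ k)"
  proof (rule summable_comparison_test)
    show "\<exists>N. \<forall>n\<ge>N. norm (pmf p n * s ^ n) \<le> s ^ n"
      using assms by (auto simp: abs_mult intro!: mult_left_le_one_le pmf_le_1)
    show "summable (\<lambda>n. s ^ n)" using assms by (intro summable_geometric) simp
  qed
  then show "(\<lambda>k. pmf p k * s ^ k) sums (\<Sum>k. pmf p k * s ^ k)" by (rule summable_sums)
  have "pgf p s = (\<Sum>k. ennreal (pmf p k * s ^ k))"
    using assms by (simp add: pgf_def nn_integral_measure_pmf nn_integral_count_space_nat ennreal_mult)
  also have "\<dots> = ennreal (\<Sum>k. pmf p k * s ^ k)"
    using assms \<open>summable _\<close> by (intro suminf_ennreal2) auto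
  finally show "pgf p s = ennreal (\<Sum>k. pmf p k * s ^ k)" .
qed

lemma pmf_eqI_pgf:
  assumes "\<And>s. 0 < s \<Longrightarrow> s < 1 \<Longrightarrow> pgf p s = pgf q s"
  shows "p = q"
proof (rule pmf_eqI)
  fix k
  have "pmf p k - pmf q k = 0"
  proof (rule powser_coeffs_eq_0)
    fix i
    show "\<bar>pmf p i - pmf q i\<bar> \<le> 1"
      using pmf_le_1[of p i] pmf_le_1[of q i] pmf_nonneg[of p i] pmf_nonneg[of q i] by linarith
  next
    fix s :: real
    assume s: "0 < s" "s < 1"
    have "(\<Sum>k. pmf p k * s ^ k) = (\<Sum>k. pmf q k * s ^ k)"
    proof -
      have "0 \<le> (\<Sum>k. pmf p k * s ^ k)" "0 \<le> (\<Sum>k. pmf q k * s ^ k)"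
        using pgf_sums_pmf(1)[of s] s by (auto intro!: suminf_nonneg sums_summable)
      then show ?thesis
        using pgf_sums_pmf(2)[of s p] pgf_sums_pmf(2)[of s q] assms[OF s] s by simp
    qed
    then show "(\<lambda>k. (pmf p k - pmf q k) * s ^ k) sums 0"
      using sums_diff[OF pgf_sums_pmf(1)[of s p] pgf_sums_pmf(1)[of s q]] s
      by (simp add: left_diff_distrib)
  qed
  then show "pmf p k = pmf q k" by simp
qed

lemma bind_LF_sum_iid_pmf:
  assumes "LF_admissible a b" "LF_admissible c d"
  shows "bind_pmf (LF a b) (sum_iid_pmf (LF c d)) = LF (a * c) (a * d + b)"
proof (rule pmf_eqI_pgf)
  fix s :: real
  assume s: "0 < s" "s < 1"
  have gf_cd: "0 \<le> lf_gf c d s" "lf_gf c d s \<le> 1"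
    using lf_gf_bounds[OF assms(2)] s by auto
  have "pgf (bind_pmf (LF a b) (sum_iid_pmf (LF c d))) s
      = (\<integral>\<^sup>+z. ennreal (lf_gf c d s ^ z) \<partial>measure_pmf (LF a b))"
    using assms s gf_cd by (simp add: pgf_bind_pmf pgf_sum_iid_pmf pgf_LF ennreal_power)
  also have "\<dots> = ennreal (lf_gf a b (lf_gf c d s))"
    using assms gf_cd by (simp flip: pgf_def add: pgf_LF)
  also have "lf_gf a b (lf_gf c d s) = lf_gf (a * c) (a * d + b) s"
    using assms s by (intro lf_gf_compose) (auto simp: LF_admissible_def)
  finally show "pgf (bind_pmf (LF a b) (sum_iid_pmf (LF c d))) s = pgf (LF (a * c) (a * d + b)) s"
    using LF_admissible_compose[OF assms] s by (simp add: pgf_LF)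
qed

lemma LF_1_0: "LF 1 0 = return_pmf 1"
proof -
  have "bernoulli_pmf 1 = return_pmf True"
    by (rule pmf_eqI) (simp split: split_indicator)
  then show ?thesis by (simp add: LF_def geom_plus_def bind_return_pmf)
qed

definition env_admissible :: "(nat \<Rightarrow> 'w \<Rightarrow> real) \<Rightarrow> (nat \<Rightarrow> 'w \<Rightarrow> real) \<Rightarrow> nat \<Rightarrow> 'w \<Rightarrow> bool" where
  "env_admissible A B n \<omega> \<longleftrightarrow> (\<forall>k\<in>{1..n}. LF_admissible (A k \<omega>) (B k \<omega>))"

lemma Pi_env_0 [simp]: "Pi_env A 0 \<omega> = 1"
  by (simp add: Pi_env_def)

lemma Pi_env_Suc: "Pi_env A (Suc j) \<omega> = Pi_env A j \<omega> * A (Suc j) \<omega>"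
  unfolding Pi_env_def by (subst prod.nat_ivl_Suc') auto

lemma Pi_env_pos: "(\<And>k. 1 \<le> k \<Longrightarrow> k \<le> j \<Longrightarrow> 0 < A k \<omega>) \<Longrightarrow> 0 < Pi_env A j \<omega>"
  unfolding Pi_env_def by (intro prod_pos) auto

lemma Rinv_env_0 [simp]: "Rinv_env A B 0 \<omega> = 0"
  by (simp add: Rinv_env_def)

lemma Rinv_env_Suc: "Rinv_env A B (Suc j) \<omega> = Rinv_env A B j \<omega> + B (Suc j) \<omega> / Pi_env A (Suc j) \<omega>"
  unfolding Rinv_env_def by (subst sum.nat_ivl_Suc') auto

lemma Rinv_env_nonneg:
  assumes "env_admissible A B n \<omega>"
  shows "0 \<le> Rinv_env A B n \<omega>"
  unfolding Rinv_env_def using assms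
  by (intro sum_nonneg)
    (auto simp: env_admissible_def LF_admissible_def intro!: divide_nonneg_pos Pi_env_pos)

lemma gw_law_reversed_env_LF:
  assumes adm: "env_admissible A B n \<omega>"
    and "i \<le> n"
  shows "LF_admissible (Pi_env A n \<omega> / Pi_env A (n - i) \<omega>)
          (Pi_env A n \<omega> * (Rinv_env A B n \<omega> - Rinv_env A B (n - i) \<omega>))
    \<and> gw_law (\<lambda>k. LF (A (n - k + 1) \<omega>) (B (n - k + 1) \<omega>)) i
      = LF (Pi_env A n \<omega> / Pi_env A (n - i) \<omega>)
          (Pi_env A n \<omega> * (Rinv_env A B n \<omega> - Rinv_env A B (n - i) \<omega>))"
  using \<open>i \<le> n\<close>
proof (induction i)
  case 0
  have "0 < Pi_env A n \<omega>"
    using adm by (intro Pi_env_pos) (auto simp: env_admissible_def LF_admissible_def)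
  then show ?case by (simp add: LF_admissible_def LF_1_0)
next
  case (Suc i)
  define j where "j = n - Suc i"
  have j: "n - i = Suc j" "n - Suc i + 1 = Suc j" "Suc j \<le> n"
    using Suc.prems by (auto simp: j_def)
  define \<alpha> where "\<alpha> = Pi_env A n \<omega> / Pi_env A (Suc j) \<omega>"
  define \<beta> where "\<beta> = Pi_env A n \<omega> * (Rinv_env A B n \<omega> - Rinv_env A B (Suc j) \<omega>)"
  have IH: "LF_admissible \<alpha> \<beta>"
    "gw_law (\<lambda>k. LF (A (n - k + 1) \<omega>) (B (n - k + 1) \<omega>)) i = LF \<alpha> \<beta>"
    using Suc j by (auto simp: \<alpha>_def \<beta>_def)
  have step: "LF_admissible (A (Suc j) \<omega>) (B (Suc j) \<omega>)"
    using adm j by (auto simp: env_admissible_def)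
  have "0 < Pi_env A j \<omega>"
    using adm j by (intro Pi_env_pos) (auto simp: env_admissible_def LF_admissible_def)
  then have "\<alpha> * A (Suc j) \<omega> = Pi_env A n \<omega> / Pi_env A j \<omega>"
    using step by (simp add: \<alpha>_def Pi_env_Suc LF_admissible_def)
  moreover have "\<alpha> * B (Suc j) \<omega> + \<beta> = Pi_env A n \<omega> * (Rinv_env A B n \<omega> - Rinv_env A B j \<omega>)"
    by (simp add: \<alpha>_def \<beta>_def Rinv_env_Suc algebra_simps)
  ultimately show ?case
    using IH LF_admissible_compose[OF IH(1) step] bind_LF_sum_iid_pmf[OF IH(1) step] j
    by (simp add: j_def)
qed

lemma Zrev_eq_LF:
  assumes "env_admissible A B n \<omega>"
  shows "LF_admissible (Pi_env A n \<omega>) (Pi_env A n \<omega> * Rinv_env A B n \<omega>)"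
    and "Zrev A B n \<omega> = LF (Pi_env A n \<omega>) (Pi_env A n \<omega> * Rinv_env A B n \<omega>)"
  using gw_law_reversed_env_LF[OF assms order.refl] by (simp_all add: Zrev_def)

lemma pmf_geom_plus:
  assumes "0 < p" "p \<le> 1"
  shows "pmf (geom_plus p) k = (if k = 0 then 0 else (1 - p) ^ (k - 1) * p)"
proof (cases k)
  case 0
  have "0 \<notin> set_pmf (geom_plus p)" by (auto simp: geom_plus_def)
  then show ?thesis using 0 by (simp add: set_pmf_iff)
next
  case (Suc j)
  then show ?thesis
    using assms by (simp add: geom_plus_def pmf_map_inj'[where f = Suc, OF inj_Suc])
qed

lemma expectation_geom_plus:
  assumes "0 < p" "p \<le> 1"
  shows "measure_pmf.expectation (geom_plus p) real = 1 / p"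
proof -
  have "measure_pmf.expectation (geom_plus p) real
      = measure_pmf.expectation (geometric_pmf p) (\<lambda>x. 1 + real x)"
    by (simp add: geom_plus_def)
  also have "\<dots> = 1 + measure_pmf.expectation (geometric_pmf p) real"
    using integrable_real_geometric_pmf[of p] assms by (subst Bochner_Integration.integral_add) auto
  also have "\<dots> = 1 / p"
    using assms by (simp add: expectation_geometric_pmf field_simps)
  finally show ?thesis .
qed

lemma pmf_LF:
  assumes "LF_admissible a b"
  shows "pmf (LF a b) k =
    (if k = 0 then 1 - 1 / (a + b) else 1 / (a + b) * pmf (geom_plus (a / (a + b))) k)"
  using assms unfolding LF_def pmf_bind LF_admissible_def by (auto simp: pmf_geom_plus)

lemma prob_LF_positive:
  assumes "LF_admissible a b"
  shows "measure_pmf.prob (LF a b) {k. 0 < k} = 1 / (a + b)"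
proof -
  have "measure_pmf.prob (LF a b) {k. 0 < k} = measure_pmf.prob (LF a b) (UNIV - {0})"
    by (intro arg_cong[where f = "measure_pmf.prob _"]) auto
  also have "\<dots> = 1 - pmf (LF a b) 0"
    using measure_pmf.prob_compl[of "{0}" "LF a b"] by (simp add: measure_pmf_single)
  finally show ?thesis using pmf_LF[OF assms, of 0] by simp
qed

lemma cond_pmf_LF_positive:
  assumes "LF_admissible a b"
  shows "cond_pmf (LF a b) {k. 0 < k} = geom_plus (a / (a + b))"
proof -
  have p: "0 < a / (a + b)" "a / (a + b) \<le> 1"
    using assms by (auto simp: LF_admissible_def)
  have "0 < pmf (LF a b) 1"
    using pmf_LF[OF assms, of 1] p assms by (simp add: pmf_geom_plus LF_admissible_def)
  then have "1 \<in> set_pmf (LF a b)"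
    by (simp add: set_pmf_iff)
  then have nonempty: "set_pmf (LF a b) \<inter> {k. 0 < k} \<noteq> {}"
    by blast
  show ?thesis
    by (rule pmf_eqI)
      (use assms p in \<open>simp add: pmf_cond[OF nonempty] prob_LF_positive pmf_LF pmf_geom_plus\<close>)
qed

lemma Zrev_survival:
  assumes "env_admissible A B n \<omega>"
  shows "Pi_env A n \<omega> * measure_pmf.prob (Zrev A B n \<omega>) {k. 0 < k} = 1 / (1 + Rinv_env A B n \<omega>)"
    and "cond_pmf (Zrev A B n \<omega>) {k. 0 < k} = geom_plus (1 / (1 + Rinv_env A B n \<omega>))"
proof -
  define a where "a = Pi_env A n \<omega>"
  define r where "r = Rinv_env A B n \<omega>"
  have "0 < a"
    unfolding a_def using assms by (intro Pi_env_pos) (auto simp: env_admissible_def LF_admissible_def)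
  moreover have "0 \<le> r" unfolding r_def using assms by (rule Rinv_env_nonneg)
  moreover have "a + a * r = a * (1 + r)"
    by (simp add: algebra_simps)
  ultimately have "a * (1 / (a + a * r)) = 1 / (1 + r)" "a / (a + a * r) = 1 / (1 + r)"
    by simp_all
  then show "a * measure_pmf.prob (Zrev A B n \<omega>) {k. 0 < k} = 1 / (1 + r)"
    "cond_pmf (Zrev A B n \<omega>) {k. 0 < k} = geom_plus (1 / (1 + r))"
    using Zrev_eq_LF[OF assms]
    by (simp_all add: a_def r_def prob_LF_positive cond_pmf_LF_positive)
qed

lemma sums_abs_diff_powers:
  fixes x y :: real
  assumes "0 \<le> x" "x < 1" "0 \<le> y" "y < 1"
  shows "(\<lambda>k. \<bar>x ^ k - y ^ k\<bar>) sums \<bar>1 / (1 - x) - 1 / (1 - y)\<bar>"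
proof -
  have "(\<lambda>k. \<bar>x ^ k - y ^ k\<bar>) sums \<bar>1 / (1 - x) - 1 / (1 - y)\<bar>" if "y \<le> x" "0 \<le> y" "x < 1"
    for x y :: real
  proof -
    have "(\<lambda>k. x ^ k - y ^ k) sums (1 / (1 - x) - 1 / (1 - y))"
      using that by (intro sums_diff geometric_sums) auto
    moreover have "\<bar>x ^ k - y ^ k\<bar> = x ^ k - y ^ k" for k
      using that by (simp add: power_mono)
    moreover have "1 / (1 - y) \<le> 1 / (1 - x)"
      using that by (simp add: frac_le)
    ultimately show ?thesis by simp
  qed
  from this[of y x] this[of x y] assms show ?thesis
    by (cases "y \<le> x") (simp_all add: abs_minus_commute)
qed

lemma tv_dist_geom_plus_le:
  assumes "0 < p" "p \<le> 1" "0 < q" "q \<le> 1"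
  shows "0 \<le> tv_dist (geom_plus q) (geom_plus p)"
    and "tv_dist (geom_plus q) (geom_plus p) \<le> 2 * \<bar>q - p\<bar> / p"
proof -
  define f where "f k = \<bar>pmf (geom_plus q) k - pmf (geom_plus p) k\<bar>" for k
  define g where "g k = q * \<bar>(1 - q) ^ k - (1 - p) ^ k\<bar> + (1 - p) ^ k * \<bar>q - p\<bar>" for k
  have "g sums (q * \<bar>1 / (1 - (1 - q)) - 1 / (1 - (1 - p))\<bar> + 1 / (1 - (1 - p)) * \<bar>q - p\<bar>)"
    unfolding g_def using assms
    by (intro sums_add sums_mult sums_mult2 sums_abs_diff_powers geometric_sums) auto
  moreover have "q * \<bar>1 / q - 1 / p\<bar> = \<bar>q - p\<bar> / p"
    using assms by (simp add: abs_mult[symmetric] field_simps abs_minus_commute)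
  ultimately have g_sums: "g sums (2 * \<bar>q - p\<bar> / p)"
    by simp
  have f_le: "f (Suc k) \<le> g k" for k
  proof -
    have "f (Suc k) = \<bar>q * ((1 - q) ^ k - (1 - p) ^ k) + (1 - p) ^ k * (q - p)\<bar>"
      unfolding f_def using assms by (simp add: pmf_geom_plus algebra_simps)
    also have "\<dots> \<le> \<bar>q * ((1 - q) ^ k - (1 - p) ^ k)\<bar> + \<bar>(1 - p) ^ k * (q - p)\<bar>"
      by (rule abs_triangle_ineq)
    also have "\<dots> = g k"
      unfolding g_def using assms by (simp add: abs_mult)
    finally show ?thesis .
  qed
  have f_nonneg: "0 \<le> f k" for k
    by (simp add: f_def)
  have summable_f: "summable (\<lambda>k. f (Suc k))"
    using f_le f_nonneg by (intro summable_comparison_test[OF _ sums_summable[OF g_sums]]) auto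
  have "f 0 = 0"
    unfolding f_def using assms by (simp add: pmf_geom_plus)
  moreover have "summable f"
    using summable_f by (simp only: summable_Suc_iff)
  ultimately have tv: "tv_dist (geom_plus q) (geom_plus p) = (\<Sum>k. f (Suc k))"
    by (simp add: tv_dist_def f_def[symmetric] suminf_split_head)
  show "0 \<le> tv_dist (geom_plus q) (geom_plus p)"
    unfolding tv using summable_f f_nonneg by (intro suminf_nonneg) auto
  show "tv_dist (geom_plus q) (geom_plus p) \<le> 2 * \<bar>q - p\<bar> / p"
    unfolding tv using summable_f g_sums f_le by (intro sums_le[OF _ summable_sums]) auto
qed

lemma tendsto_tv_dist_geom_plus:
  assumes "q \<longlonglongrightarrow> p" "0 < p" "p \<le> 1" "\<And>n. 0 < q n \<and> q n \<le> 1"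
  shows "(\<lambda>n. tv_dist (geom_plus (q n)) (geom_plus p)) \<longlonglongrightarrow> 0"
proof (rule tendsto_sandwich[of "\<lambda>_. 0" _ _ "\<lambda>n. 2 * \<bar>q n - p\<bar> / p"])
  show "\<forall>\<^sub>F n in sequentially. 0 \<le> tv_dist (geom_plus (q n)) (geom_plus p)"
    "\<forall>\<^sub>F n in sequentially. tv_dist (geom_plus (q n)) (geom_plus p) \<le> 2 * \<bar>q n - p\<bar> / p"
    using tv_dist_geom_plus_le[OF assms(2,3)] assms(4) by auto
  have "(\<lambda>n. 2 * \<bar>q n - p\<bar> / p) \<longlonglongrightarrow> 2 * \<bar>p - p\<bar> / p"
    using assms(2) by (intro tendsto_intros assms(1)) auto
  then show "(\<lambda>n. 2 * \<bar>q n - p\<bar> / p) \<longlonglongrightarrow> 0"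
    by simp
qed simp

lemma Zrev_conditioned_limits:
  assumes adm: "\<And>n. env_admissible A B n \<omega>"
    and conv: "convergent (\<lambda>n. Rinv_env A B n \<omega>)"
  shows "(\<forall>n. Pi_env A n \<omega> * measure_pmf.prob (Zrev A B n \<omega>) {k. k > 0}
            = 1 / measure_pmf.expectation (cond_pmf (Zrev A B n \<omega>) {k. k > 0}) real)
    \<and> ((\<lambda>n. Pi_env A n \<omega> * measure_pmf.prob (Zrev A B n \<omega>) {k. k > 0})
            \<longlonglongrightarrow> 1 / (1 + Rinv_inf A B \<omega>))
    \<and> ((\<lambda>n. tv_dist (cond_pmf (Zrev A B n \<omega>) {k. k > 0})
                     (geom_plus (1 / (1 + Rinv_inf A B \<omega>)))) \<longlonglongrightarrow> 0)"
proof -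
  define q where "q n = 1 / (1 + Rinv_env A B n \<omega>)" for n
  have R_nonneg: "0 \<le> Rinv_env A B n \<omega>" for n
    using adm by (rule Rinv_env_nonneg)
  have q: "0 < q n \<and> q n \<le> 1" for n
    using R_nonneg[of n] by (simp add: q_def)
  have "(\<lambda>n. Rinv_env A B n \<omega>) \<longlonglongrightarrow> Rinv_inf A B \<omega>"
    using conv by (simp add: Rinv_inf_def convergent_LIMSEQ_iff)
  moreover from this have "0 \<le> Rinv_inf A B \<omega>"
    using R_nonneg by (intro LIMSEQ_le_const) auto
  ultimately have lim_q: "q \<longlonglongrightarrow> 1 / (1 + Rinv_inf A B \<omega>)"
    unfolding q_def by (intro tendsto_intros) auto
  have "Pi_env A n \<omega> * measure_pmf.prob (Zrev A B n \<omega>) {k. 0 < k} = q n"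
    "cond_pmf (Zrev A B n \<omega>) {k. 0 < k} = geom_plus (q n)" for n
    using Zrev_survival[OF adm] by (simp_all add: q_def)
  with q lim_q \<open>0 \<le> Rinv_inf A B \<omega>\<close> show ?thesis
    using tendsto_tv_dist_geom_plus[OF lim_q] by (simp add: expectation_geom_plus)
qed

theorem theorem3p1:
  fixes M :: "'w measure" and A B :: "nat \<Rightarrow> 'w \<Rightarrow> real"
  assumes "prob_space M"
    and meas: "\<And>n. A n \<in> borel_measurable M" "\<And>n. B n \<in> borel_measurable M"
    and indep: "prob_space.indep_vars M (\<lambda>_. borel) (\<lambda>n \<omega>. (A n \<omega>, B n \<omega>)) {1..}"
    and ident: "\<And>n. n \<ge> 1 \<Longrightarrow>
        distr M borel (\<lambda>\<omega>. (A n \<omega>, B n \<omega>)) = distr M borel (\<lambda>\<omega>. (A 1 \<omega>, B 1 \<omega>))"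
    and valid: "\<And>n. n \<ge> 1 \<Longrightarrow>
        AE \<omega> in M. A n \<omega> > 0 \<and> B n \<omega> > 0 \<and> A n \<omega> + B n \<omega> \<ge> 1"
    and sub1: "AE \<omega> in M. convergent (\<lambda>n. Rinv_env A B n \<omega>)"
    and sub2: "AE \<omega> in M. filterlim (\<lambda>n. R_env A B n \<omega>) at_top sequentially"
  shows "AE \<omega> in M.
      (\<forall>n. Pi_env A n \<omega> * measure_pmf.prob (Zrev A B n \<omega>) {k. k > 0}
            = 1 / measure_pmf.expectation (cond_pmf (Zrev A B n \<omega>) {k. k > 0}) real)
    \<and> ((\<lambda>n. Pi_env A n \<omega> * measure_pmf.prob (Zrev A B n \<omega>) {k. k > 0})
            \<longlonglongrightarrow> 1 / (1 + Rinv_inf A B \<omega>))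
    \<and> ((\<lambda>n. tv_dist (cond_pmf (Zrev A B n \<omega>) {k. k > 0})
                     (geom_plus (1 / (1 + Rinv_inf A B \<omega>)))) \<longlonglongrightarrow> 0)"
proof -
  have "AE \<omega> in M. LF_admissible (A k \<omega>) (B k \<omega>)" if "1 \<le> k" for k
    using valid[OF that] by eventually_elim (simp add: LF_admissible_def)
  then have "AE \<omega> in M. \<forall>k\<in>{1..}. LF_admissible (A k \<omega>) (B k \<omega>)"
    by (subst AE_ball_countable) auto
  then have "AE \<omega> in M. \<forall>n. env_admissible A B n \<omega>"
    by eventually_elim (auto simp: env_admissible_def)
  with sub1 show ?thesis
    by eventually_elim (rule Zrev_conditioned_limits, auto)
qed

end
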